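(* Let $K\subset\mathbb{R}^n$ and $C\subset\mathbb{R}^m$ be nonempty, convex, closed and bounded sets, and let $f,h:\mathbb{R}^n\times\mathbb{R}^m\to\mathbb{R}$ be continuous functions such that, for every $y\in K$, $f(y,\cdot)$ and $h(y,\cdot)$ are convex, and such that $f$ takes only positive values. Let $\varepsilon>\varepsilon'>0$, let $y_\varepsilon$ (resp. $y_{\varepsilon'}$) be an optimal solution of $(\mathcal{P}_\varepsilon)$ (resp. $(\mathcal{P}_{\varepsilon'})$), and let $x_\varepsilon\in\mathcal{S}_\varepsilon(y_\varepsilon)$, $x_{\varepsilon'}\in\mathcal{S}_{\varepsilon'}(y_{\varepsilon'})$. Let $y^*$ be an optimal solution of $(\widetilde{\mathcal{P}})$ and $x^*\in\mathcal{S}(y^* )$. Then $$f^2(y_\varepsilon,x_\varepsilon)\le f^2(y_{\varepsilon'},x_{\varepsilon'})\le f^2(y^*,x^* ).$$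
   Context: $f^2=(f)^2$. For $y\in K$: $\mathcal{S}(y)=\operatorname{argmin}\{h(y,z)\mid z\in C\}$; for $\varepsilon>0$, $\mathcal{S}_\varepsilon(y)=\operatorname{argmin}\{h(y,z)+\varepsilon f^2(y,z)\mid z\in C\}$; $\widetilde{\mathcal{S}}(y)=\operatorname{argmin}\{f^2(y,z)\mid z\in\mathcal{S}(y)\}$. $(\mathcal{P}_\varepsilon)$: maximize $f(y,x)$ over $y\in K$, $x\in\mathcal{S}_\varepsilon(y)$; $y_\varepsilon\in K$ is optimal if $f(y_\varepsilon,x')\ge f(y,x)$ for all $x'\in\mathcal{S}_\varepsilon(y_\varepsilon)$, $y\in K$, $x\in\mathcal{S}_\varepsilon(y)$. $(\widetilde{\mathcal{P}})$: maximize $f(y,x)$ over $y\in K$, $x\in\widetilde{\mathcal{S}}(y)$; $y^*\in K$ is optimal if $f(y^*,x')\ge f(y,x)$ for all $x'\in\widetilde{\mathcal{S}}(y^* )$, $y\in K$, $x\in\widetilde{\mathcal{S}}(y)$. *)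

theory Defs
  imports "HOL-Analysis.Analysis"
begin

definition argmin_set :: "('b \<Rightarrow> real) \<Rightarrow> 'b set \<Rightarrow> 'b set" where
  "argmin_set g A = {z \<in> A. \<forall>z'\<in>A. g z \<le> g z'}"

definition S_sol :: "('a \<times> 'b \<Rightarrow> real) \<Rightarrow> 'b set \<Rightarrow> 'a \<Rightarrow> 'b set" where
  "S_sol h C y = argmin_set (\<lambda>z. h (y, z)) C"

definition S_eps :: "('a \<times> 'b \<Rightarrow> real) \<Rightarrow> ('a \<times> 'b \<Rightarrow> real) \<Rightarrow> 'b set \<Rightarrow> real \<Rightarrow> 'a \<Rightarrow> 'b set" where
  "S_eps f h C eps y = argmin_set (\<lambda>z. h (y, z) + eps * (f (y, z))^2) C"

definition S_tilde :: "('a \<times> 'b \<Rightarrow> real) \<Rightarrow> ('a \<times> 'b \<Rightarrow> real) \<Rightarrow> 'b set \<Rightarrow> 'a \<Rightarrow> 'b set" where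
  "S_tilde f h C y = argmin_set (\<lambda>z. (f (y, z))^2) (S_sol h C y)"

text \<open>y0 is an optimal solution of: maximize f(y,x) over y in K, x in Sol(y) (pessimistic sense
  as in the paper: f(y0,x') \<ge> f(y,x) for all x' in Sol(y0), y in K, x in Sol(y)).\<close>
definition optimal_sol :: "('a \<times> 'b \<Rightarrow> real) \<Rightarrow> 'a set \<Rightarrow> ('a \<Rightarrow> 'b set) \<Rightarrow> 'a \<Rightarrow> bool" where
  "optimal_sol f K Sol y0 \<longleftrightarrow> y0 \<in> K \<and>
     (\<forall>x'\<in>Sol y0. \<forall>y\<in>K. \<forall>x\<in>Sol y. f (y, x) \<le> f (y0, x'))"

end

theory Submission
  imports Defs
begin

text \<open>Comparing the minimality of a solution of the penalized lower-level problem for two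
  parameters \<open>\<epsilon> > \<epsilon>'\<close> at the same upper-level point shows that \<open>f\<^sup>2\<close> does not increase with
  \<open>\<epsilon>\<close>; the unpenalized problem behaves like the parameter \<open>0\<close>, and \<open>S_tilde\<close> additionally
  minimizes \<open>f\<^sup>2\<close> over \<open>S_sol\<close>. Pessimistic optimality of the upper-level points transports
  these comparisons across different upper-level points, and positivity of \<open>f\<close> turns
  inequalities for \<open>f\<close> into inequalities for \<open>f\<^sup>2\<close>.\<close>

lemma argmin_set_penalty_antimono:
  fixes g q :: "'b \<Rightarrow> real"
  assumes "x \<in> argmin_set (\<lambda>z. g z + a * q z) A"
    and "x' \<in> argmin_set (\<lambda>z. g z + b * q z) A"
    and "b < a"
  shows "q x \<le> q x'"
proof -
  have "g x + a * q x \<le> g x' + a * q x'" and "g x' + b * q x' \<le> g x + b * q x"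
    using assms(1,2) by (auto simp: argmin_set_def)
  then have "(a - b) * (q x - q x') \<le> 0"
    by (simp add: algebra_simps)
  with \<open>b < a\<close> show ?thesis
    by (simp add: mult_le_0_iff)
qed

lemma argmin_set_penalty_le_unpenalized:
  fixes g q :: "'b \<Rightarrow> real"
  assumes "x \<in> argmin_set (\<lambda>z. g z + a * q z) A" "x' \<in> argmin_set g A" "0 < a"
  shows "q x \<le> q x'"
  using argmin_set_penalty_antimono[of x g a q A x' 0] assms by simp

lemma argmin_set_nonempty:
  assumes "compact A" "A \<noteq> {}" "continuous_on A g"
  shows "argmin_set g A \<noteq> {}"
  using continuous_attains_inf[OF assms] unfolding argmin_set_def by blast

lemma compact_argmin_set:
  fixes g :: "'b::t2_space \<Rightarrow> real"
  assumes "compact A" "continuous_on A g"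
  shows "compact (argmin_set g A)"
proof (cases "argmin_set g A = {}")
  case False
  then obtain m where m: "m \<in> argmin_set g A" by blast
  then have "argmin_set g A = A \<inter> g -` {..g m}"
    by (auto simp: argmin_set_def intro: order_trans)
  moreover have "closed (A \<inter> g -` {..g m})"
    using assms by (intro continuous_closed_preimage) (auto intro: compact_imp_closed)
  ultimately show ?thesis
    using compact_Int_closed[OF \<open>compact A\<close>] by (metis Int_absorb Int_assoc)
qed simp

lemma continuous_on_slice:
  assumes "continuous_on UNIV (g :: 'a::topological_space \<times> 'b::topological_space \<Rightarrow> real)"
  shows "continuous_on A (\<lambda>z. g (y, z))"
  by (rule continuous_on_compose2[OF assms]) (auto intro!: continuous_intros)

lemma S_eps_nonempty:
  assumes "compact C" "C \<noteq> {}" "continuous_on UNIV f" "continuous_on UNIV h"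
  shows "S_eps f h C \<epsilon> y \<noteq> {}"
  unfolding S_eps_def using assms
  by (intro argmin_set_nonempty continuous_intros continuous_on_slice)

lemma S_tilde_nonempty:
  fixes C :: "'b::t2_space set"
  assumes "compact C" "C \<noteq> {}" "continuous_on UNIV f" "continuous_on UNIV h"
  shows "S_tilde f h C y \<noteq> {}"
proof -
  have "compact (S_sol h C y)"
    unfolding S_sol_def using assms by (intro compact_argmin_set continuous_on_slice)
  moreover have "S_sol h C y \<noteq> {}"
    unfolding S_sol_def using assms by (intro argmin_set_nonempty continuous_on_slice)
  ultimately show ?thesis
    unfolding S_tilde_def using assms
    by (intro argmin_set_nonempty continuous_intros continuous_on_slice)
qed

lemma S_eps_antimono:
  assumes "x \<in> S_eps f h C \<epsilon> y" "x' \<in> S_eps f h C \<epsilon>' y" "\<epsilon>' < \<epsilon>"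
  shows "(f (y, x))\<^sup>2 \<le> (f (y, x'))\<^sup>2"
  using assms unfolding S_eps_def by (rule argmin_set_penalty_antimono)

lemma S_eps_le_S_sol:
  assumes "x \<in> S_eps f h C \<epsilon> y" "x' \<in> S_sol h C y" "0 < \<epsilon>"
  shows "(f (y, x))\<^sup>2 \<le> (f (y, x'))\<^sup>2"
  using assms unfolding S_eps_def S_sol_def by (rule argmin_set_penalty_le_unpenalized)

lemma S_tilde_le_S_sol:
  assumes "x \<in> S_tilde f h C y" "x' \<in> S_sol h C y"
  shows "(f (y, x))\<^sup>2 \<le> (f (y, x'))\<^sup>2"
  using assms by (auto simp: S_tilde_def argmin_set_def)

lemma S_tilde_subset_S_sol: "S_tilde f h C y \<subseteq> S_sol h C y"
  by (auto simp: S_tilde_def argmin_set_def)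

lemma optimal_sol_sq_le:
  assumes "optimal_sol f K Sol y\<^sub>0" "y \<in> K" "x \<in> Sol y" "x' \<in> Sol y\<^sub>0" "\<forall>p. f p > 0"
  shows "(f (y, x))\<^sup>2 \<le> (f (y\<^sub>0, x'))\<^sup>2"
proof (rule power_mono)
  show "f (y, x) \<le> f (y\<^sub>0, x')"
    using assms(1-4) by (auto simp: optimal_sol_def)
  show "0 \<le> f (y, x)"
    using assms(5) by (simp add: less_imp_le)
qed

theorem lemma4p2:
  fixes K :: "'a::euclidean_space set" and C :: "'b::euclidean_space set"
    and f h :: "'a \<times> 'b \<Rightarrow> real"
    and \<epsilon> \<epsilon>' :: real and y\<^sub>\<epsilon> y\<^sub>\<epsilon>' y\<^sub>s x\<^sub>\<epsilon> x\<^sub>\<epsilon>' x\<^sub>s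
  assumes "K \<noteq> {}" "convex K" "closed K" "bounded K"
    and "C \<noteq> {}" "convex C" "closed C" "bounded C"
    and "continuous_on UNIV f" "continuous_on UNIV h"
    and "\<forall>y\<in>K. convex_on UNIV (\<lambda>x. f (y, x))"
    and "\<forall>y\<in>K. convex_on UNIV (\<lambda>x. h (y, x))"
    and "\<forall>p. f p > 0"
    and "\<epsilon> > \<epsilon>'" "\<epsilon>' > 0"
    and "optimal_sol f K (S_eps f h C \<epsilon>) y\<^sub>\<epsilon>"
    and "optimal_sol f K (S_eps f h C \<epsilon>') y\<^sub>\<epsilon>'"
    and "x\<^sub>\<epsilon> \<in> S_eps f h C \<epsilon> y\<^sub>\<epsilon>"
    and "x\<^sub>\<epsilon>' \<in> S_eps f h C \<epsilon>' y\<^sub>\<epsilon>'"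
    and "optimal_sol f K (S_tilde f h C) y\<^sub>s"
    and "x\<^sub>s \<in> S_sol h C y\<^sub>s"
  shows "(f (y\<^sub>\<epsilon>, x\<^sub>\<epsilon>))^2 \<le> (f (y\<^sub>\<epsilon>', x\<^sub>\<epsilon>'))^2
       \<and> (f (y\<^sub>\<epsilon>', x\<^sub>\<epsilon>'))^2 \<le> (f (y\<^sub>s, x\<^sub>s))^2"
proof
  have "compact C" using \<open>closed C\<close> \<open>bounded C\<close> by (simp add: compact_eq_bounded_closed)
  note nonempty = S_eps_nonempty[OF this] S_tilde_nonempty[OF this]
  have "y\<^sub>\<epsilon> \<in> K" "y\<^sub>\<epsilon>' \<in> K" using assms(16,17) by (simp_all add: optimal_sol_def)
  obtain x' where x': "x' \<in> S_eps f h C \<epsilon>' y\<^sub>\<epsilon>" using nonempty(1) assms by blast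
  have "(f (y\<^sub>\<epsilon>, x\<^sub>\<epsilon>))^2 \<le> (f (y\<^sub>\<epsilon>, x'))^2"
    using S_eps_antimono[OF assms(18) x' assms(14)] .
  also have "\<dots> \<le> (f (y\<^sub>\<epsilon>', x\<^sub>\<epsilon>'))^2"
    using optimal_sol_sq_le[OF assms(17) \<open>y\<^sub>\<epsilon> \<in> K\<close> x' assms(19,13)] .
  finally show "(f (y\<^sub>\<epsilon>, x\<^sub>\<epsilon>))^2 \<le> (f (y\<^sub>\<epsilon>', x\<^sub>\<epsilon>'))^2" .
  obtain u v where u: "u \<in> S_tilde f h C y\<^sub>\<epsilon>'" and v: "v \<in> S_tilde f h C y\<^sub>s"
    using nonempty(2) assms by blast
  have "u \<in> S_sol h C y\<^sub>\<epsilon>'"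
    using S_tilde_subset_S_sol u ..
  then have "(f (y\<^sub>\<epsilon>', x\<^sub>\<epsilon>'))^2 \<le> (f (y\<^sub>\<epsilon>', u))^2"
    using S_eps_le_S_sol[OF assms(19) _ assms(15)] by blast
  also have "\<dots> \<le> (f (y\<^sub>s, v))^2"
    using optimal_sol_sq_le[OF assms(20) \<open>y\<^sub>\<epsilon>' \<in> K\<close> u v assms(13)] .
  also have "\<dots> \<le> (f (y\<^sub>s, x\<^sub>s))^2"
    using S_tilde_le_S_sol[OF v assms(21)] .
  finally show "(f (y\<^sub>\<epsilon>', x\<^sub>\<epsilon>'))^2 \<le> (f (y\<^sub>s, x\<^sub>s))^2" .
qed

end
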